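(* In the setting of the context, for every $j\ge0$, the generating function $\varphi_j(x)=\sum_{i\ge0}\pi_{i,j}x^i$ satisfies $$\varphi_j(x)\sim C^j\pi_{0,0}(1-r_0x)^{-j-1}\quad\text{as } r_0x\to1,$$ i.e. $\lim_{r_0x\to1}(1-r_0x)^{j+1}\varphi_j(x)=C^j\pi_{0,0}$, where $$C=\frac{q}{\bar q}\cdot\frac{\bar p\mu_hr_0^2+(p\mu_h+\bar p\bar\mu_h)r_0+p\bar\mu_h}{p\bar\mu_h-\bar p\mu_hr_0^2}.$$
   Context: Fix $p,q,\mu_h,\mu_l\in(0,1)$ with $p+q+\mu_h+\mu_l=1$ and $\mu_l\le\mu_h$. For real $x$ write $\bar x=1-x$; let $\rho=p/\mu_h+q/\mu_l$ and assume $\rho<1$. Let $(Q_1(n),Q_2(n))_{n\ge0}$ be the discrete-time Markov chain on $\mathbb{Z}_{\ge0}^2$ (numbers of high- and low-priority customers in a discrete-time preemptive priority queue, early arrival system) whose one-step transition probabilities from $(i,j)$ to $(i+k,j+l)$ are as follows (unlisted transitions have probability $0$). If $i\ge1$, $j\ge0$: $(k,l)=(1,0)$: $p\bar q\bar\mu_h$; $(1,1)$: $pq\bar\mu_h$; $(0,1)$: $pq\mu_h+\bar pq\bar\mu_h$; $(-1,1)$: $\bar pq\mu_h$; $(-1,0)$: $\bar p\bar q\mu_h$; $(0,0)$: $\bar p\bar q\bar\mu_h+p\bar q\mu_h$. If $i=0$, $j\ge1$: $(1,0)$: $p\bar q\bar\mu_h$; $(1,1)$: $pq\bar\mu_h$;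 $(0,1)$: $pq\mu_h+\bar pq\bar\mu_l$; $(0,-1)$: $\bar p\bar q\mu_l$; $(0,0)$: $\bar p\bar q\bar\mu_l+p\bar q\mu_h+\bar pq\mu_l$. If $(i,j)=(0,0)$: $(1,0)$: $p\bar q\bar\mu_h$; $(1,1)$: $pq\bar\mu_h$; $(0,1)$: $pq\mu_h+\bar pq\bar\mu_l$; $(0,0)$: $\bar p\bar q+p\bar q\mu_h+\bar pq\mu_l$. Let $(\pi_{i,j})_{i,j\ge0}$ be its stationary distribution. Let $r_0=1/x_1(0)$, where $x_1(0)=\frac{1-(p\mu_h+\bar p\bar\mu_h)\bar q+\sqrt{\Delta(0)}}{2p\bar\mu_h\bar q}$ with $\Delta(0)=(p\mu_h-\bar p\bar\mu_h)^2\bar q^2-2(p\mu_h+\bar p\bar\mu_h)\bar q+1>0$ and the positive square root; $\varphi_j$ is understood as its analytic continuation to a neighbourhood of $1/r_0$ minus the point $1/r_0$, and the limit is taken within a $\Delta$-domain at $1/r_0$. *)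

theory Defs
  imports "HOL-Analysis.Analysis"
begin

text \<open>One-step transition probabilities of the discrete-time preemptive priority
queue (early arrival system).\<close>

definition trans_prob :: "real \<Rightarrow> real \<Rightarrow> real \<Rightarrow> real \<Rightarrow> nat \<times> nat \<Rightarrow> nat \<times> nat \<Rightarrow> real" where
  "trans_prob p q mh ml s t =
    (let i = fst s; j = snd s; k = int (fst t) - int i; l = int (snd t) - int j;
         pb = 1 - p; qb = 1 - q; mhb = 1 - mh; mlb = 1 - ml in
     if i \<ge> 1 then
       (if (k, l) = (1, 0) then p * qb * mhb
        else if (k, l) = (1, 1) then p * q * mhb
        else if (k, l) = (0, 1) then p * q * mh + pb * q * mhb
        else if (k, l) = (-1, 1) then pb * q * mh
        else if (k, l) = (-1, 0) then pb * qb * mh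
        else if (k, l) = (0, 0) then pb * qb * mhb + p * qb * mh
        else 0)
     else if j \<ge> 1 then
       (if (k, l) = (1, 0) then p * qb * mhb
        else if (k, l) = (1, 1) then p * q * mhb
        else if (k, l) = (0, 1) then p * q * mh + pb * q * mlb
        else if (k, l) = (0, -1) then pb * qb * ml
        else if (k, l) = (0, 0) then pb * qb * mlb + p * qb * mh + pb * q * ml
        else 0)
     else
       (if (k, l) = (1, 0) then p * qb * mhb
        else if (k, l) = (1, 1) then p * q * mhb
        else if (k, l) = (0, 1) then p * q * mh + pb * q * mlb
        else if (k, l) = (0, 0) then pb * qb + p * qb * mh + pb * q * ml
        else 0))"

definition stationary_dist :: "real \<Rightarrow> real \<Rightarrow> real \<Rightarrow> real \<Rightarrow> (nat \<Rightarrow> nat \<Rightarrow> real) \<Rightarrow> bool" where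
  "stationary_dist p q mh ml \<pi> \<longleftrightarrow>
     (\<forall>i j. \<pi> i j \<ge> 0) \<and>
     ((\<lambda>(i, j). \<pi> i j) has_sum 1) UNIV \<and>
     (\<forall>i' j'. ((\<lambda>(i, j). \<pi> i j * trans_prob p q mh ml (i, j) (i', j')) has_sum \<pi> i' j') UNIV)"

definition Delta0 :: "real \<Rightarrow> real \<Rightarrow> real \<Rightarrow> real" where
  "Delta0 p q mh = (p * mh - (1 - p) * (1 - mh))^2 * (1 - q)^2
                   - 2 * (p * mh + (1 - p) * (1 - mh)) * (1 - q) + 1"

definition x1_0 :: "real \<Rightarrow> real \<Rightarrow> real \<Rightarrow> real" where
  "x1_0 p q mh = (1 - (p * mh + (1 - p) * (1 - mh)) * (1 - q) + sqrt (Delta0 p q mh))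
                 / (2 * p * (1 - mh) * (1 - q))"

definition r0 :: "real \<Rightarrow> real \<Rightarrow> real \<Rightarrow> real" where
  "r0 p q mh = 1 / x1_0 p q mh"

definition Cconst :: "real \<Rightarrow> real \<Rightarrow> real \<Rightarrow> real" where
  "Cconst p q mh = (let r = r0 p q mh in
     q / (1 - q) * (((1 - p) * mh * r^2 + (p * mh + (1 - p) * (1 - mh)) * r + p * (1 - mh))
                    / (p * (1 - mh) - (1 - p) * mh * r^2)))"

text \<open>Delta-domain at zeta (Flajolet--Sedgewick): radius R > |zeta|, angle 0 < phi < pi/2.\<close>
definition delta_domain :: "complex \<Rightarrow> real \<Rightarrow> real \<Rightarrow> complex set" where
  "delta_domain \<zeta> R \<phi> = {z. cmod z < R \<and> z \<noteq> \<zeta> \<and> \<bar>Arg (z - \<zeta>)\<bar> > \<phi>}"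

end

theory Submission
  imports Defs
begin

text \<open>For i \<ge> 1 the balance equations of row j of \<pi> form a second-order linear recurrence in i,
  inhomogeneous through row j - 1, whose characteristic polynomial has the root r = r0 < 1 and a
  second root > 1. Since \<pi> is bounded, the exploding solutions are excluded, and induction on j gives
  \<pi> i j = r^i P_j(i) with P_j a polynomial of degree j whose leading coefficient in the binomial
  basis is C^j \<pi>(0,0). Hence \<phi>_j(x) = \<Sum>_k c_k (r x)^k / (1 - r x)^(k+1) is rational, and
  (1 - r x)^(j+1) \<phi>_j(x) \<rightarrow> c_j.\<close>

section \<open>Binomial power series\<close>

lemma binomial_power_series_sums_Suc:
  fixes x :: "'a::{real_normed_field,banach}"
  assumes x: "norm x < 1"
    and summable: "summable (\<lambda>i. norm (of_nat (i choose k) * x ^ i))"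
    and sums: "(\<lambda>i. of_nat (i choose k) * x ^ i) sums (x ^ k / (1 - x) ^ (k + 1))"
  shows "(\<lambda>i. of_nat (i choose Suc k) * x ^ i) sums (x ^ Suc k / (1 - x) ^ (Suc k + 1))"
proof -
  have geometric: "(\<lambda>i. x ^ i) sums (1 / (1 - x))"
    using x geometric_sums by blast
  have "summable (\<lambda>i. norm (x ^ i))"
    using x by (simp add: norm_power summable_geometric)
  from Cauchy_product_sums[OF summable this]
  have "(\<lambda>n. \<Sum>i\<le>n. of_nat (i choose k) * x ^ i * x ^ (n - i)) sums
      ((\<Sum>i. of_nat (i choose k) * x ^ i) * (\<Sum>i. x ^ i))" .
  moreover have "(\<Sum>i\<le>n. of_nat (i choose k) * x ^ i * x ^ (n - i)) = of_nat (Suc n choose Suc k) * x ^ n"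
    for n
  proof -
    have "(\<Sum>i\<le>n. of_nat (i choose k) * x ^ i * x ^ (n - i)) = (\<Sum>i\<le>n. of_nat (i choose k) * x ^ n)"
      by (intro sum.cong refl) (simp add: mult.assoc flip: power_add)
    then show ?thesis
      by (simp add: sum_choose_upper flip: sum_distrib_right of_nat_sum)
  qed
  ultimately have "(\<lambda>n. of_nat (Suc n choose Suc k) * x ^ n) sums (x ^ k / (1 - x) ^ (k + 1) * (1 / (1 - x)))"
    using sums_unique[OF sums] sums_unique[OF geometric] by simp
  then have "(\<lambda>n. x * (of_nat (Suc n choose Suc k) * x ^ n)) sums (x * (x ^ k / (1 - x) ^ (k + 1) * (1 / (1 - x))))"
    by (rule sums_mult)
  then have "(\<lambda>n. of_nat (Suc n choose Suc k) * x ^ Suc n) sums (x ^ Suc k / (1 - x) ^ (Suc k + 1))"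
    using x by (simp add: field_simps)
  then have "(\<lambda>n. of_nat (n choose Suc k) * x ^ n) sums (x ^ Suc k / (1 - x) ^ (Suc k + 1) + of_nat (0 choose Suc k) * x ^ 0)"
    by (rule sums_Suc)
  then show ?thesis
    by simp
qed

lemma binomial_power_series_sums_real:
  fixes x :: real
  assumes "0 \<le> x" "x < 1"
  shows "(\<lambda>i. real (i choose k) * x ^ i) sums (x ^ k / (1 - x) ^ (k + 1))"
proof (induction k)
  case 0
  then show ?case using geometric_sums[of x] assms by simp
next
  case (Suc k)
  then have "summable (\<lambda>i. norm (real (i choose k) * x ^ i))"
    using assms by (simp add: sums_summable)
  with Suc.IH assms show ?case
    by (intro binomial_power_series_sums_Suc) simp_all
qed

lemma binomial_power_series_sums:
  fixes w :: "'a::{real_normed_field,banach}"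
  assumes "norm w < 1"
  shows "(\<lambda>i. of_nat (i choose k) * w ^ i) sums (w ^ k / (1 - w) ^ (k + 1))"
proof (induction k)
  case 0
  then show ?case using geometric_sums[of w] assms by simp
next
  case (Suc k)
  have "summable (\<lambda>i. real (i choose k) * norm w ^ i)"
    using binomial_power_series_sums_real[of "norm w" k] assms sums_summable by fastforce
  then have "summable (\<lambda>i. norm (of_nat (i choose k) * w ^ i))"
    by (simp add: norm_mult norm_power)
  from binomial_power_series_sums_Suc[OF assms this Suc.IH] show ?case .
qed

section \<open>Geometric sequences with polynomial weights\<close>

definition binom_poly :: "(nat \<Rightarrow> real) \<Rightarrow> nat \<Rightarrow> nat \<Rightarrow> real" where
  "binom_poly c N i = (\<Sum>k\<le>N. c k * real (i choose k))"

lemma binom_poly_Suc: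
  assumes "c (Suc N) = 0"
  shows "binom_poly c N (Suc i) = binom_poly (\<lambda>k. c k + c (Suc k)) N i"
proof -
  have "(\<Sum>k\<le>N. c k * real (Suc i choose k)) =
        (\<Sum>k\<le>N. (c k + c (Suc k)) * real (i choose k)) - c (Suc N) * real (i choose N)"
    by (induction N) (simp_all add: algebra_simps)
  with assms show ?thesis
    unfolding binom_poly_def by simp
qed

lemma binom_poly_Suc_degree:
  "binom_poly c (Suc N) i = c 0 + (\<Sum>m<i. binom_poly (\<lambda>k. c (Suc k)) N m)"
proof -
  have sum_choose: "(\<Sum>m<i. m choose k) = i choose Suc k" for k
    by (induction i) simp_all
  have "(\<Sum>m<i. binom_poly (\<lambda>k. c (Suc k)) N m) = (\<Sum>k\<le>N. c (Suc k) * real (\<Sum>m<i. m choose k))"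
    unfolding binom_poly_def by (subst sum.swap) (simp add: sum_distrib_left)
  also have "\<dots> = (\<Sum>k\<le>N. c (Suc k) * real (i choose Suc k))"
    by (simp only: sum_choose)
  finally show ?thesis
    unfolding binom_poly_def sum.atMost_Suc_shift by (simp del: sum.atMost_Suc)
qed

lemma binom_poly_geometric_bounded:
  fixes r :: real
  assumes "0 \<le> r" "r < 1"
  obtains K where "\<And>m. \<bar>binom_poly c N m * r ^ m\<bar> \<le> K"
proof -
  have "(\<lambda>m. real (m choose k) * r ^ m) \<longlonglongrightarrow> 0" for k
    using binomial_power_series_sums_real[OF assms] by (blast intro: summable_LIMSEQ_zero sums_summable)
  then have "(\<lambda>m. \<Sum>k\<le>N. c k * (real (m choose k) * r ^ m)) \<longlonglongrightarrow> (\<Sum>k\<le>N. c k * 0)"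
    by (intro tendsto_intros)
  then have "(\<lambda>m. binom_poly c N m * r ^ m) \<longlonglongrightarrow> 0"
    by (simp add: binom_poly_def sum_distrib_right mult.assoc)
  then have "Bseq (\<lambda>m. binom_poly c N m * r ^ m)"
    using convergent_imp_Bseq convergentI by blast
  then show ?thesis
    using that unfolding Bseq_def real_norm_def by (meson less_imp_le)
qed

lemma geometric_growth_bounded_imp_zero:
  fixes e :: "nat \<Rightarrow> real"
  assumes "\<beta> > 0" "r > 0" "\<alpha> * r > \<beta>"
    and rec: "\<And>m. \<beta> * e (Suc m) = \<alpha> * e m"
    and bounded: "\<And>m. \<bar>e m * r ^ m\<bar> \<le> K"
  shows "e m = 0"
proof -
  define t where "t = \<alpha> * r / \<beta>"
  have "t > 1"
    unfolding t_def using assms by simp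
  have growth: "e m * r ^ m = t ^ m * e 0" for m
  proof (induction m)
    case (Suc m)
    have "e (Suc m) = \<alpha> / \<beta> * e m"
      using rec[of m] \<open>\<beta> > 0\<close> by (simp add: field_simps)
    then have "e (Suc m) * r ^ Suc m = t * (e m * r ^ m)"
      unfolding t_def by (simp add: field_simps)
    with Suc show ?case by simp
  qed simp
  have "e 0 = 0"
  proof (rule ccontr)
    assume "e 0 \<noteq> 0"
    obtain n where "K / \<bar>e 0\<bar> < t ^ n"
      using real_arch_pow[OF \<open>t > 1\<close>] by blast
    with \<open>e 0 \<noteq> 0\<close> have "K < t ^ n * \<bar>e 0\<bar>"
      by (simp add: field_simps)
    also have "\<dots> = \<bar>e n * r ^ n\<bar>"
      using growth[of n] \<open>t > 1\<close> by (simp add: abs_mult)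
    also have "\<dots> \<le> K"
      by (rule bounded)
    finally show False
      by simp
  qed
  then show ?thesis
    using growth[of m] \<open>r > 0\<close> by simp
qed

lemma backward_recurrence_solution:
  fixes g :: "nat \<Rightarrow> real"
  assumes "\<gamma> \<noteq> 0"
  shows "\<exists>d. (\<forall>k>N. d k = 0) \<and> d N = g N / \<gamma> \<and> (\<forall>k\<le>N. \<gamma> * d k + \<beta> * d (Suc k) = g k)"
proof (induction N arbitrary: g)
  case 0
  show ?case
    by (rule exI[of _ "\<lambda>k. if k = 0 then g 0 / \<gamma> else 0"]) (simp add: assms)
next
  case (Suc N)
  from Suc.IH[of "\<lambda>k. g (Suc k)"] obtain d where d: "\<forall>k>N. d k = 0" "d N = g (Suc N) / \<gamma>"
    "\<forall>k\<le>N. \<gamma> * d k + \<beta> * d (Suc k) = g (Suc k)"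
    by blast
  let ?d = "case_nat ((g 0 - \<beta> * d 0) / \<gamma>) d"
  have "\<gamma> * ?d k + \<beta> * ?d (Suc k) = g k" if "k \<le> Suc N" for k
    using d(3) that assms by (cases k) auto
  with d(1,2) show ?case
    by (intro exI[of _ ?d]) (auto split: nat.split)
qed

lemma binom_poly_first_order_solution:
  fixes g :: "nat \<Rightarrow> real"
  assumes "\<alpha> \<noteq> \<beta>"
  obtains d where "\<And>k. N < k \<Longrightarrow> d k = 0" "d N = g N / (\<beta> - \<alpha>)"
    "\<And>m. \<beta> * binom_poly d N (Suc m) - \<alpha> * binom_poly d N m = binom_poly g N m"
proof -
  obtain d where d: "\<forall>k>N. d k = 0" "d N = g N / (\<beta> - \<alpha>)"
    "\<forall>k\<le>N. (\<beta> - \<alpha>) * d k + \<beta> * d (Suc k) = g k"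
    using backward_recurrence_solution[of "\<beta> - \<alpha>" N g \<beta>] assms by auto
  have "\<beta> * binom_poly d N (Suc m) - \<alpha> * binom_poly d N m = binom_poly g N m" for m
  proof -
    have shift: "binom_poly d N (Suc m) = binom_poly (\<lambda>k. d k + d (Suc k)) N m"
      using d(1) by (intro binom_poly_Suc) simp
    have "\<beta> * binom_poly d N (Suc m) - \<alpha> * binom_poly d N m
        = (\<Sum>k\<le>N. ((\<beta> - \<alpha>) * d k + \<beta> * d (Suc k)) * real (m choose k))"
      unfolding shift unfolding binom_poly_def
      by (simp add: sum_distrib_left flip: sum_subtractf) (simp add: algebra_simps)
    also have "\<dots> = binom_poly g N m"
      unfolding binom_poly_def using d(3) by (intro sum.cong) auto
    finally show ?thesis .
  qed
  with d(1,2) show ?thesis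
    by (intro that[of d]) auto
qed

lemma second_order_recurrence_binom_poly:
  fixes u g :: "nat \<Rightarrow> real"
  assumes "\<beta> > 0" "0 < r" "r < 1" "\<alpha> * r > \<beta>"
    and rec: "\<And>m. \<beta> * (u (Suc (Suc m)) - u (Suc m)) - \<alpha> * (u (Suc m) - u m) = binom_poly g N m"
    and bounded: "\<And>m. \<bar>(u (Suc m) - u m) * r ^ m\<bar> \<le> K"
  obtains c where "\<And>k. Suc N < k \<Longrightarrow> c k = 0" "c (Suc N) = g N / (\<beta> - \<alpha>)"
    "\<And>i. u i = binom_poly c (Suc N) i"
proof -
  have "0 < \<alpha> * r"
    using assms(1,4) by linarith
  then have "\<alpha> > 0"
    using assms(2) by (simp add: zero_less_mult_iff)
  then have "\<alpha> * r < \<alpha>"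
    using assms(3) by simp
  then have "\<alpha> \<noteq> \<beta>"
    using assms(4) by linarith
  obtain d where d: "\<And>k. N < k \<Longrightarrow> d k = 0" "d N = g N / (\<beta> - \<alpha>)"
    and particular: "\<And>m. \<beta> * binom_poly d N (Suc m) - \<alpha> * binom_poly d N m = binom_poly g N m"
    using binom_poly_first_order_solution[OF \<open>\<alpha> \<noteq> \<beta>\<close>, of N g] by blast
  obtain K' where K': "\<And>m. \<bar>binom_poly d N m * r ^ m\<bar> \<le> K'"
    using binom_poly_geometric_bounded[OF less_imp_le[OF assms(2)] assms(3), of d N] by blast
  txt \<open>The homogeneous solutions grow like (\<alpha>/\<beta>)^m, faster than r^-m, so the bound leaves only
    the particular one.\<close>
  have "(u (Suc m) - u m) - binom_poly d N m = 0" for m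
  proof (rule geometric_growth_bounded_imp_zero[where K = "K + K'"])
    show "\<beta> * ((u (Suc (Suc m)) - u (Suc m)) - binom_poly d N (Suc m))
        = \<alpha> * ((u (Suc m) - u m) - binom_poly d N m)" for m
      using rec[of m] particular[of m] by (simp add: algebra_simps)
    show "\<bar>((u (Suc m) - u m) - binom_poly d N m) * r ^ m\<bar> \<le> K + K'" for m
      by (rule order_trans[OF _ add_mono[OF bounded[of m] K'[of m]]])
        (simp only: left_diff_distrib abs_triangle_ineq4)
  qed (use assms in auto)
  then have "u (Suc m) = u m + binom_poly d N m" for m
    by (simp add: algebra_simps)
  then have partial_sums: "u i = u 0 + (\<Sum>m<i. binom_poly d N m)" for i
    by (induction i) simp_all
  define c where "c = case_nat (u 0) d"
  have "c k = 0" if "Suc N < k" for k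
    using that d(1) unfolding c_def by (cases k) auto
  moreover have "c (Suc N) = g N / (\<beta> - \<alpha>)"
    unfolding c_def using d(2) by simp
  moreover have "u i = binom_poly c (Suc N) i" for i
    unfolding binom_poly_Suc_degree c_def using partial_sums[of i] by simp
  ultimately show ?thesis
    by (rule that)
qed

lemma rescaled_balance:
  fixes x :: "nat \<Rightarrow> real"
  assumes "r > 0" and characteristic: "B * r\<^sup>2 - (1 - D) * r + A = 0"
    and balance: "x (Suc m) = A * x m + D * x (Suc m) + B * x (Suc (Suc m)) + y"
  shows "B * r * (x (Suc (Suc m)) / r ^ Suc (Suc m) - x (Suc m) / r ^ Suc m)
           - A / r * (x (Suc m) / r ^ Suc m - x m / r ^ m) = - y / r ^ Suc m"
proof -
  have "B * x (Suc (Suc m)) - (1 - D) * x (Suc m) + A * x m = - y"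
    using balance by (simp only: left_diff_distrib mult_1_left)
  moreover have "1 - D = B * r + A / r"
    using characteristic \<open>r > 0\<close> by (simp add: field_simps power2_eq_square)
  ultimately have "B * x (Suc (Suc m)) - (B * r + A / r) * x (Suc m) + A * x m = - y"
    by simp
  moreover have "B * r * (x (Suc (Suc m)) / r ^ Suc (Suc m) - x (Suc m) / r ^ Suc m)
           - A / r * (x (Suc m) / r ^ Suc m - x m / r ^ m)
      = (B * x (Suc (Suc m)) - (B * r + A / r) * x (Suc m) + A * x m) / r ^ Suc m"
    using \<open>r > 0\<close> by (simp add: field_simps)
  ultimately show ?thesis
    by simp
qed

definition binom_geometric_gf :: "(nat \<Rightarrow> real) \<Rightarrow> nat \<Rightarrow> real \<Rightarrow> complex \<Rightarrow> complex" where
  "binom_geometric_gf c N r z =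
     (\<Sum>k\<le>N. of_real (c k) * (of_real r * z) ^ k / (1 - of_real r * z) ^ (k + 1))"

lemma binom_geometric_gf_sums:
  assumes "r > 0" "cmod z < 1 / r"
  shows "(\<lambda>i. of_real (r ^ i * binom_poly c N i) * z ^ i) sums binom_geometric_gf c N r z"
proof -
  have "cmod (of_real r * z) < 1"
    using assms by (simp add: norm_mult field_simps)
  then have "(\<lambda>i. \<Sum>k\<le>N. of_real (c k) * (of_nat (i choose k) * (of_real r * z) ^ i)) sums
      (\<Sum>k\<le>N. of_real (c k) * ((of_real r * z) ^ k / (1 - of_real r * z) ^ (k + 1)))"
    by (intro sums_sum sums_mult binomial_power_series_sums)
  then show ?thesis
    unfolding binom_geometric_gf_def binom_poly_def
    by (simp add: sum_distrib_left sum_distrib_right power_mult_distrib mult_ac)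
qed

lemma binom_geometric_gf_holomorphic:
  assumes "r \<noteq> 0"
  shows "binom_geometric_gf c N r holomorphic_on - {of_real (1 / r)}"
proof -
  have "1 - of_real r * z \<noteq> 0" if "z \<noteq> of_real (1 / r)" for z :: complex
    using that assms by (auto simp: field_simps simp flip: of_real_mult)
  then show ?thesis
    unfolding binom_geometric_gf_def by (intro holomorphic_intros) auto
qed

lemma binom_geometric_gf_pole:
  assumes "r \<noteq> 0"
  shows "((\<lambda>z. (1 - of_real r * z) ^ (N + 1) * binom_geometric_gf c N r z) \<longlongrightarrow> of_real (c N))
           (at (of_real (1 / r)))"
proof -
  define P where "P z = (\<Sum>k\<le>N. of_real (c k) * (of_real r * z) ^ k * (1 - of_real r * z) ^ (N - k))"
    for z :: complex
  have "(1 - of_real r * z) ^ (N + 1) * binom_geometric_gf c N r z = P z"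
    if "z \<noteq> of_real (1 / r)" for z
  proof -
    define w where "w = of_real r * z"
    have nonzero: "1 - w \<noteq> 0"
      using that assms unfolding w_def by (auto simp: field_simps simp flip: of_real_mult)
    have "(1 - w) ^ (N + 1) * binom_geometric_gf c N r z
        = (\<Sum>k\<le>N. of_real (c k) * w ^ k * ((1 - w) ^ (N + 1) / (1 - w) ^ (k + 1)))"
      unfolding binom_geometric_gf_def sum_distrib_left w_def[symmetric]
      by (intro sum.cong refl) (simp add: field_simps)
    also have "\<dots> = P z"
      unfolding P_def w_def[symmetric]
    proof (intro sum.cong refl)
      fix k
      assume "k \<in> {..N}"
      then have "(1 - w) ^ (N + 1) = (1 - w) ^ (N - k) * (1 - w) ^ (k + 1)"
        by (simp flip: power_add)
      then show "of_real (c k) * w ^ k * ((1 - w) ^ (N + 1) / (1 - w) ^ (k + 1))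
          = of_real (c k) * w ^ k * (1 - w) ^ (N - k)"
        using nonzero by simp
    qed
    finally show ?thesis
      unfolding w_def .
  qed
  then have "\<forall>\<^sub>F z in at (of_real (1 / r)). P z = (1 - of_real r * z) ^ (N + 1) * binom_geometric_gf c N r z"
    by (simp add: eventually_at_filter)
  moreover have "(P \<longlongrightarrow> P (of_real (1 / r))) (at (of_real (1 / r)))"
    unfolding P_def by (intro tendsto_intros)
  moreover have "P (of_real (1 / r)) = of_real (c N)"
  proof -
    have "of_real r * of_real (1 / r) = (1 :: complex)"
      using assms by (simp flip: of_real_mult)
    then have "P (of_real (1 / r)) = (\<Sum>k\<le>N. if k = N then of_real (c k) else 0)"
      unfolding P_def by (intro sum.cong refl) auto
    then show ?thesis
      by simp
  qed
  ultimately show ?thesis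
    by (auto intro: Lim_transform_eventually)
qed

section \<open>The preemptive priority queue\<close>

lemma quadratic_root:
  fixes A B T x :: real
  assumes "A \<noteq> 0" "0 \<le> T\<^sup>2 - 4 * A * B" "2 * A * x = T + sqrt (T\<^sup>2 - 4 * A * B)"
  shows "A * x\<^sup>2 - T * x + B = 0"
proof -
  have "(2 * A * x - T)\<^sup>2 = T\<^sup>2 - 4 * A * B"
    using assms(2,3) by simp
  then have "4 * A * (A * x\<^sup>2 - T * x + B) = 0"
    by (simp add: algebra_simps power2_eq_square)
  with assms(1) show ?thesis
    by simp
qed

lemma stationary_dist_le_1:
  assumes "stationary_dist p q mh ml \<pi>"
  shows "\<pi> i j \<le> 1"
proof -
  have "((\<lambda>(i, j). \<pi> i j) has_sum \<pi> i j) {(i, j)}"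
    using has_sum_finite[of "{(i, j)}" "\<lambda>(i, j). \<pi> i j"] by simp
  moreover have "((\<lambda>(i, j). \<pi> i j) has_sum 1) UNIV"
    using assms unfolding stationary_dist_def by blast
  ultimately show ?thesis
    by (rule has_sum_mono_neutral) (use assms in \<open>auto simp: stationary_dist_def\<close>)
qed

lemma trans_prob_to_busy:
  "trans_prob p q mh ml (m, n) (Suc m, n) = p * (1 - q) * (1 - mh)"
  "trans_prob p q mh ml (Suc m, n) (Suc m, n) = (1 - p) * (1 - q) * (1 - mh) + p * (1 - q) * mh"
  "trans_prob p q mh ml (Suc (Suc m), n) (Suc m, n) = (1 - p) * (1 - q) * mh"
  "trans_prob p q mh ml (m, n) (Suc m, Suc n) = p * q * (1 - mh)"
  "trans_prob p q mh ml (Suc m, n) (Suc m, Suc n) = p * q * mh + (1 - p) * q * (1 - mh)"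
  "trans_prob p q mh ml (Suc (Suc m), n) (Suc m, Suc n) = (1 - p) * q * mh"
  by (simp_all add: trans_prob_def Let_def)

lemma stationary_dist_balance_finite:
  assumes "stationary_dist p q mh ml \<pi>" "finite S"
    and "\<And>i j. (i, j) \<notin> S \<Longrightarrow> trans_prob p q mh ml (i, j) (i', j') = 0"
  shows "\<pi> i' j' = (\<Sum>(i, j)\<in>S. \<pi> i j * trans_prob p q mh ml (i, j) (i', j'))"
proof -
  have "((\<lambda>(i, j). \<pi> i j * trans_prob p q mh ml (i, j) (i', j')) has_sum \<pi> i' j') UNIV"
    using assms(1) unfolding stationary_dist_def by blast
  moreover have "((\<lambda>(i, j). \<pi> i j * trans_prob p q mh ml (i, j) (i', j')) has_sum
      (\<Sum>(i, j)\<in>S. \<pi> i j * trans_prob p q mh ml (i, j) (i', j'))) UNIV"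
    by (rule has_sum_finite_neutralI) (use assms(2,3) in auto)
  ultimately show ?thesis
    by (rule has_sum_unique)
qed

lemma trans_prob_to_busy_nonzero:
  assumes "trans_prob p q mh ml (i, j) (Suc m, n) \<noteq> 0"
  shows "i \<in> {m, Suc m, Suc (Suc m)} \<and> (j = n \<or> Suc j = n)"
  using assms unfolding trans_prob_def Let_def by (auto split: if_splits)

locale preemptive_priority_queue =
  fixes p q mh ml :: real and \<pi> :: "nat \<Rightarrow> nat \<Rightarrow> real"
  assumes p: "0 < p" "p < 1" and q: "0 < q" "q < 1" and mh: "0 < mh" "mh < 1"
    and stationary: "stationary_dist p q mh ml \<pi>"
begin

text \<open>a_kl (am_kl when k = -1) is the probability of the jump (k, l) from a state (i, j) with i \<ge> 1.
  From i = 0 the upward jumps have the same probabilities, so only these weights enter the balance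
  equations at the states with i \<ge> 1.\<close>

definition "a10 = p * (1 - q) * (1 - mh)"
definition "a00 = (1 - p) * (1 - q) * (1 - mh) + p * (1 - q) * mh"
definition "am10 = (1 - p) * (1 - q) * mh"
definition "a11 = p * q * (1 - mh)"
definition "a01 = p * q * mh + (1 - p) * q * (1 - mh)"
definition "am11 = (1 - p) * q * mh"

lemmas jump_weight_defs = a10_def a00_def am10_def a11_def a01_def am11_def

lemma jump_weights_pos: "0 < a10" "0 < am10"
  using p q mh unfolding jump_weight_defs by simp_all

lemma balance_busy:
  "\<pi> (Suc m) (Suc n) = a10 * \<pi> m (Suc n) + a00 * \<pi> (Suc m) (Suc n) + am10 * \<pi> (Suc (Suc m)) (Suc n)
     + (a11 * \<pi> m n + a01 * \<pi> (Suc m) n + am11 * \<pi> (Suc (Suc m)) n)"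
proof -
  let ?S = "{(m, Suc n), (Suc m, Suc n), (Suc (Suc m), Suc n), (m, n), (Suc m, n), (Suc (Suc m), n)}"
  have "\<pi> (Suc m) (Suc n) = (\<Sum>(i, j)\<in>?S. \<pi> i j * trans_prob p q mh ml (i, j) (Suc m, Suc n))"
    by (rule stationary_dist_balance_finite[OF stationary]) (auto dest: trans_prob_to_busy_nonzero)
  then show ?thesis
    by (simp add: trans_prob_to_busy jump_weight_defs algebra_simps)
qed

lemma balance_busy_bottom:
  "\<pi> (Suc m) 0 = a10 * \<pi> m 0 + a00 * \<pi> (Suc m) 0 + am10 * \<pi> (Suc (Suc m)) 0"
proof -
  let ?S = "{(m, 0), (Suc m, 0), (Suc (Suc m), 0)}"
  have "\<pi> (Suc m) 0 = (\<Sum>(i, j)\<in>?S. \<pi> i j * trans_prob p q mh ml (i, j) (Suc m, 0))"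
    by (rule stationary_dist_balance_finite[OF stationary]) (auto dest: trans_prob_to_busy_nonzero)
  then show ?thesis
    by (simp add: trans_prob_to_busy jump_weight_defs algebra_simps)
qed

lemma Delta0_eq: "Delta0 p q mh = (1 - a00)\<^sup>2 - 4 * a10 * am10"
  unfolding Delta0_def jump_weight_defs by (simp add: algebra_simps power2_eq_square)

lemma Delta0_gt: "(a10 - am10)\<^sup>2 < Delta0 p q mh"
proof -
  have "Delta0 p q mh - (a10 - am10)\<^sup>2 = q * (2 * a10 + 2 * am10 + q)"
    unfolding Delta0_def jump_weight_defs by (simp add: algebra_simps power2_eq_square)
  also have "\<dots> > 0"
    using q jump_weights_pos by simp
  finally show ?thesis
    by simp
qed

lemma x1_0_eq: "2 * a10 * x1_0 p q mh = 1 - a00 + sqrt (Delta0 p q mh)"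
  using jump_weights_pos unfolding x1_0_def by (simp add: field_simps jump_weight_defs)

lemma x1_0_bounds: "1 < x1_0 p q mh" "am10 < a10 * x1_0 p q mh"
proof -
  have "\<bar>a10 - am10\<bar> < sqrt (Delta0 p q mh)"
    using Delta0_gt by (intro real_less_rsqrt) simp
  moreover have "1 - a00 = a10 + am10 + q"
    unfolding jump_weight_defs by (simp add: algebra_simps)
  ultimately have "2 * a10 * 1 < 2 * a10 * x1_0 p q mh" "2 * am10 < 2 * a10 * x1_0 p q mh"
    using x1_0_eq q by linarith+
  then show "1 < x1_0 p q mh" "am10 < a10 * x1_0 p q mh"
    using jump_weights_pos by (auto dest: mult_left_less_imp_less)
qed

lemma x1_0_root: "a10 * (x1_0 p q mh)\<^sup>2 - (1 - a00) * x1_0 p q mh + am10 = 0"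
proof (rule quadratic_root)
  show "a10 \<noteq> 0"
    using jump_weights_pos by simp
  show "0 \<le> (1 - a00)\<^sup>2 - 4 * a10 * am10"
    using Delta0_gt zero_le_power2[of "a10 - am10"] unfolding Delta0_eq by linarith
  show "2 * a10 * x1_0 p q mh = 1 - a00 + sqrt ((1 - a00)\<^sup>2 - 4 * a10 * am10)"
    using x1_0_eq unfolding Delta0_eq .
qed

abbreviation "r \<equiv> r0 p q mh"

lemma r_pos: "0 < r" and r_less_1: "r < 1"
  using x1_0_bounds(1) unfolding r0_def by simp_all

lemma r_characteristic: "am10 * r\<^sup>2 - (1 - a00) * r + a10 = 0"
proof -
  have "am10 * r\<^sup>2 - (1 - a00) * r + a10
      = (a10 * (x1_0 p q mh)\<^sup>2 - (1 - a00) * x1_0 p q mh + am10) / (x1_0 p q mh)\<^sup>2"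
    using x1_0_bounds(1) unfolding r0_def by (simp add: field_simps power2_eq_square)
  then show ?thesis
    using x1_0_root by simp
qed

lemma am10_mult_r_less_a10: "am10 * r < a10"
  using x1_0_bounds unfolding r0_def by (simp add: field_simps)

lemma Cconst_eq: "Cconst p q mh = (a11 / r + a01 + am11 * r) / (a10 / r - am10 * r)"
proof -
  define X where "X = (1 - p) * mh * r\<^sup>2 + (p * mh + (1 - p) * (1 - mh)) * r + p * (1 - mh)"
  define Y where "Y = p * (1 - mh) - (1 - p) * mh * r\<^sup>2"
  have "am10 * r * r \<le> am10 * r"
    using r_pos r_less_1 jump_weights_pos by (intro mult_right_le_one_le) simp_all
  then have "0 < a10 - am10 * r\<^sup>2"
    using am10_mult_r_less_a10 by (simp add: power2_eq_square)
  moreover have "a10 - am10 * r\<^sup>2 = (1 - q) * Y"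
    unfolding Y_def jump_weight_defs by (simp add: algebra_simps)
  ultimately have "Y \<noteq> 0"
    by auto
  have "a11 / r + a01 + am11 * r = q * X / r"
    unfolding X_def jump_weight_defs using r_pos by (simp add: field_simps power2_eq_square)
  moreover have "a10 / r - am10 * r = (1 - q) * Y / r"
    unfolding Y_def jump_weight_defs using r_pos by (simp add: field_simps power2_eq_square)
  ultimately have "(a11 / r + a01 + am11 * r) / (a10 / r - am10 * r) = q / (1 - q) * (X / Y)"
    using r_pos by simp
  then show ?thesis
    unfolding Cconst_def Let_def X_def Y_def by simp
qed

lemma rescaled_difference_bounded: "\<bar>(\<pi> (Suc m) n / r ^ Suc m - \<pi> m n / r ^ m) * r ^ m\<bar> \<le> 1 / r + 1"
proof -
  have "0 \<le> \<pi> i j" "\<pi> i j \<le> 1" for i j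
    using stationary stationary_dist_le_1 unfolding stationary_dist_def by blast+
  then have "0 \<le> \<pi> (Suc m) n / r" "\<pi> (Suc m) n / r \<le> 1 / r" "0 \<le> \<pi> m n" "\<pi> m n \<le> 1"
    using r_pos by (simp_all add: divide_right_mono)
  moreover have "(\<pi> (Suc m) n / r ^ Suc m - \<pi> m n / r ^ m) * r ^ m = \<pi> (Suc m) n / r - \<pi> m n"
    using r_pos by (simp add: field_simps)
  moreover have "0 < 1 / r"
    using r_pos by simp
  ultimately show ?thesis
    unfolding abs_le_iff by linarith
qed

lemma bottom_row: "\<pi> i 0 = r ^ i * \<pi> 0 0"
proof -
  define u where "u i = \<pi> i 0 / r ^ i" for i
  have "u (Suc m) - u m = 0" for m
  proof (rule geometric_growth_bounded_imp_zero)
    show "am10 * r * (u (Suc (Suc m)) - u (Suc m)) = a10 / r * (u (Suc m) - u m)" for m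
    proof -
      have "\<pi> (Suc m) 0 = a10 * \<pi> m 0 + a00 * \<pi> (Suc m) 0 + am10 * \<pi> (Suc (Suc m)) 0 + 0"
        by (subst add_0_right) (rule balance_busy_bottom)
      from rescaled_balance[where x = "\<lambda>i. \<pi> i 0", OF r_pos r_characteristic this]
      show ?thesis
        unfolding u_def by simp
    qed
    show "\<bar>(u (Suc m) - u m) * r ^ m\<bar> \<le> 1 / r + 1" for m
      unfolding u_def by (rule rescaled_difference_bounded)
  qed (use r_pos am10_mult_r_less_a10 jump_weights_pos in simp_all)
  then have "u (Suc m) = u m" for m
    by simp
  then have "u i = u 0"
    by (induction i) simp_all
  then show ?thesis
    using r_pos unfolding u_def by (simp add: field_simps)
qed

definition row_forcing :: "(nat \<Rightarrow> real) \<Rightarrow> nat \<Rightarrow> real" where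
  "row_forcing c k = - (a11 / r * c k + a01 * (c k + c (Suc k))
                        + am11 * r * (c k + 2 * c (Suc k) + c (Suc (Suc k))))"

lemma row_recurrence:
  assumes top: "\<And>k. n < k \<Longrightarrow> c k = 0" and row: "\<And>i. \<pi> i n = r ^ i * binom_poly c n i"
  defines "u \<equiv> \<lambda>i. \<pi> i (Suc n) / r ^ i"
  shows "am10 * r * (u (Suc (Suc m)) - u (Suc m)) - a10 / r * (u (Suc m) - u m) = binom_poly (row_forcing c) n m"
proof -
  define c1 where "c1 k = c k + c (Suc k)" for k
  define c2 where "c2 k = c1 k + c1 (Suc k)" for k
  have shift1: "binom_poly c n (Suc i) = binom_poly c1 n i" for i
    unfolding c1_def using top by (intro binom_poly_Suc) simp
  have shift2: "binom_poly c1 n (Suc i) = binom_poly c2 n i" for i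
    unfolding c2_def using top by (intro binom_poly_Suc) (simp add: c1_def)
  have "am10 * r * (u (Suc (Suc m)) - u (Suc m)) - a10 / r * (u (Suc m) - u m)
      = - (a11 * \<pi> m n + a01 * \<pi> (Suc m) n + am11 * \<pi> (Suc (Suc m)) n) / r ^ Suc m"
    unfolding u_def
    by (rule rescaled_balance[where x = "\<lambda>i. \<pi> i (Suc n)", OF r_pos r_characteristic balance_busy])
  also have "\<dots> = - (a11 / r * binom_poly c n m + a01 * binom_poly c1 n m + am11 * r * binom_poly c2 n m)"
    using r_pos by (simp add: row shift1 shift2 field_simps)
  also have "\<dots> = binom_poly (\<lambda>k. - (a11 / r * c k + a01 * c1 k + am11 * r * c2 k)) n m"
    unfolding binom_poly_def
    by (simp add: sum_distrib_left sum.distrib sum_subtractf sum_negf algebra_simps)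
  also have "(\<lambda>k. - (a11 / r * c k + a01 * c1 k + am11 * r * c2 k)) = row_forcing c"
    unfolding row_forcing_def c2_def c1_def by (simp add: algebra_simps)
  finally show ?thesis .
qed

lemma next_row:
  assumes top: "\<And>k. n < k \<Longrightarrow> c k = 0" and row: "\<And>i. \<pi> i n = r ^ i * binom_poly c n i"
  obtains c' where "\<And>k. Suc n < k \<Longrightarrow> c' k = 0" "c' (Suc n) = Cconst p q mh * c n"
    "\<And>i. \<pi> i (Suc n) = r ^ i * binom_poly c' (Suc n) i"
proof -
  define u where "u i = \<pi> i (Suc n) / r ^ i" for i
  have rec: "am10 * r * (u (Suc (Suc m)) - u (Suc m)) - a10 / r * (u (Suc m) - u m)
      = binom_poly (row_forcing c) n m" for m
    unfolding u_def using row_recurrence[OF top row] by simp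
  have bounded: "\<bar>(u (Suc m) - u m) * r ^ m\<bar> \<le> 1 / r + 1" for m
    unfolding u_def by (rule rescaled_difference_bounded)
  have "am10 * r > 0" "a10 / r * r > am10 * r"
    using r_pos am10_mult_r_less_a10 jump_weights_pos by simp_all
  from second_order_recurrence_binom_poly[OF this(1) r_pos r_less_1 this(2) rec bounded]
  obtain c' where c': "\<And>k. Suc n < k \<Longrightarrow> c' k = 0"
    "c' (Suc n) = row_forcing c n / (am10 * r - a10 / r)" "\<And>i. u i = binom_poly c' (Suc n) i"
    by blast
  have "row_forcing c n = - ((a11 / r + a01 + am11 * r) * c n)"
    unfolding row_forcing_def using top by (simp add: algebra_simps)
  moreover have "am10 * r - a10 / r = - (a10 / r - am10 * r)"
    by simp
  ultimately have lead: "c' (Suc n) = Cconst p q mh * c n"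
    unfolding c'(2) Cconst_eq by (simp only: minus_divide_divide) simp
  have "\<pi> i (Suc n) = r ^ i * binom_poly c' (Suc n) i" for i
    using c'(3)[of i] r_pos unfolding u_def by (simp add: field_simps)
  with c'(1) lead show ?thesis
    by (rule that)
qed

lemma row_representation:
  "\<exists>c. (\<forall>k>n. c k = 0) \<and> c n = Cconst p q mh ^ n * \<pi> 0 0 \<and> (\<forall>i. \<pi> i n = r ^ i * binom_poly c n i)"
proof (induction n)
  case 0
  have "\<pi> i 0 = r ^ i * binom_poly (\<lambda>k. if k = 0 then \<pi> 0 0 else 0) 0 i" for i
    using bottom_row[of i] by (simp add: binom_poly_def)
  then show ?case
    by (intro exI[of _ "\<lambda>k. if k = 0 then \<pi> 0 0 else 0"]) simp
next
  case (Suc n)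
  then obtain c where top: "\<forall>k>n. c k = 0" and lead: "c n = Cconst p q mh ^ n * \<pi> 0 0"
    and row: "\<forall>i. \<pi> i n = r ^ i * binom_poly c n i"
    by blast
  obtain c' where "\<And>k. Suc n < k \<Longrightarrow> c' k = 0" "c' (Suc n) = Cconst p q mh * c n"
    "\<And>i. \<pi> i (Suc n) = r ^ i * binom_poly c' (Suc n) i"
    using next_row[OF top[rule_format] row[rule_format]] by blast
  with lead show ?case
    by (intro exI[of _ c']) simp
qed

end

theorem lemma6p1:
  fixes p q mh ml :: real and \<pi> :: "nat \<Rightarrow> nat \<Rightarrow> real" and j :: nat
  assumes "0 < p" "p < 1" "0 < q" "q < 1" "0 < mh" "mh < 1" "0 < ml" "ml < 1"
    and "p + q + mh + ml = 1" and "ml \<le> mh"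
    and "p / mh + q / ml < 1"
    and "stationary_dist p q mh ml \<pi>"
  shows "\<exists>R \<phi> g. R > 1 / r0 p q mh \<and> 0 < \<phi> \<and> \<phi> < pi / 2 \<and>
           g holomorphic_on delta_domain (complex_of_real (1 / r0 p q mh)) R \<phi> \<and>
           (\<forall>z. cmod z < 1 / r0 p q mh \<longrightarrow>
                  (\<lambda>i. complex_of_real (\<pi> i j) * z ^ i) sums g z) \<and>
           ((\<lambda>z. (1 - complex_of_real (r0 p q mh) * z) ^ (j + 1) * g z)
              \<longlongrightarrow> complex_of_real (Cconst p q mh ^ j * \<pi> 0 0))
             (at (complex_of_real (1 / r0 p q mh))
                within delta_domain (complex_of_real (1 / r0 p q mh)) R \<phi>)"
proof -
  interpret preemptive_priority_queue p q mh ml \<pi>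
    using assms by unfold_locales
  obtain c where lead: "c j = Cconst p q mh ^ j * \<pi> 0 0"
    and row: "\<And>i. \<pi> i j = r0 p q mh ^ i * binom_poly c j i"
    using row_representation by blast
  define \<Delta> where "\<Delta> = delta_domain (complex_of_real (1 / r0 p q mh)) (2 / r0 p q mh) (pi / 4)"
  have "\<Delta> \<subseteq> - {complex_of_real (1 / r0 p q mh)}"
    unfolding \<Delta>_def delta_domain_def by auto
  moreover have "r0 p q mh \<noteq> 0"
    using r_pos by simp
  ultimately have "binom_geometric_gf c j (r0 p q mh) holomorphic_on \<Delta>"
    "((\<lambda>z. (1 - complex_of_real (r0 p q mh) * z) ^ (j + 1) * binom_geometric_gf c j (r0 p q mh) z)
       \<longlongrightarrow> complex_of_real (Cconst p q mh ^ j * \<pi> 0 0)) (at (complex_of_real (1 / r0 p q mh)) within \<Delta>)"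
    using binom_geometric_gf_holomorphic binom_geometric_gf_pole[of "r0 p q mh" j c]
    by (auto simp: lead intro: holomorphic_on_subset tendsto_mono[OF at_le])
  moreover have "(\<lambda>i. complex_of_real (\<pi> i j) * z ^ i) sums binom_geometric_gf c j (r0 p q mh) z"
    if "cmod z < 1 / r0 p q mh" for z
    using binom_geometric_gf_sums[OF r_pos that] by (simp add: row)
  moreover have "1 / r0 p q mh < 2 / r0 p q mh"
    using r_pos by (simp add: divide_strict_right_mono)
  ultimately show ?thesis
    unfolding \<Delta>_def by (intro exI[of _ "2 / r0 p q mh"] exI[of _ "pi / 4"]) auto
qed

end
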